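(* The proof system $\mathbf{DFD}$ is sound with respect to general relational models (every $\mathbf{DFD}$-provable formula is true at every state of every general relational model), and the proof system $\mathbf{DFD}^{\neq\emptyset}$ is sound with respect to general relational models of $\mathsf{DFD}^{\neq\emptyset}$.
   Context: Vocabulary: finite set $V$ of basic variables and predicate symbols with arities. Terms: $v\in V$, and $\bigcirc x$ for a term $x$. Formulas of $\mathcal{L}$: $P(x_1,\dots,x_k)$, $\neg\varphi$, $\varphi\wedge\psi$, $\bigcirc\varphi$, $\mathsf{D}_X\varphi$, $D_Xy$ ($X$ a finite, possibly empty, set of terms). $\mathcal{L}^{\neq\emptyset}$: sublanguage where all subscripts $X$ are non-empty. Abbreviations: $\bigcirc X=\{\bigcirc x:x\in X\}$, $D_XY:=\bigwedge_{y\in Y}D_Xy$ for finite $Y$, $\widehat{\mathsf{D}}_X=\neg\mathsf{D}_X\neg$. Proof system $\mathbf{DFD}$: all propositional tautologies and modus ponens; $\bigcirc(\varphi\to\psi)\to(\bigcirc\varphi\to\bigcirc\psi)$; $\bigcirc\neg\varphi\leftrightarrow\neg\bigcirc\varphi$; $\mathsf{D}_X(\varphi\to\psi)\to(\mathsf{D}_X\varphi\to\mathsf{D}_X\psi)$; $P(x_1,\dots,x_n)\to\mathsf{D}_{\{x_1,\dots,x_n\}}P(x_1,\dots,x_n)$; $D_Xy\to\mathsf{D}_XD_Xy$; $\mathsf{D}_X\varphi\to\varphi$; $\mathsf{D}_X\varphi\to\mathsf{D}_X\mathsf{D}_X\varphi$; $\neg\mathsf{D}_X\varphi\to\mathsf{D}_X\neg\mathsf{D}_X\varphi$;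 rule: from $\varphi$ infer $\mathsf{D}_X\varphi$; $D_Xx$ for $x\in X$; $D_XY\wedge D_YZ\to D_XZ$; $D_V\bigcirc v$ for $v\in V$; $D_XY\wedge\mathsf{D}_Y\varphi\to\mathsf{D}_X\varphi$; $\mathsf{D}_\emptyset\varphi\to\bigcirc\varphi$; $\bigcirc P(x_1,\dots,x_k)\leftrightarrow P(\bigcirc x_1,\dots,\bigcirc x_k)$; $\bigcirc\mathsf{D}_X\varphi\to\mathsf{D}_{\bigcirc X}\bigcirc\varphi$; $\bigcirc D_Xy\to D_{\bigcirc X}\bigcirc y$. $\mathbf{DFD}^{\neq\emptyset}$: the restriction of all axioms and rules of $\mathbf{DFD}$ to formulas of $\mathcal{L}^{\neq\emptyset}$, plus the rule: from $\varphi$ infer $\bigcirc\varphi$. A general relational model is $(W,g,=_X,\|\cdot\|)_X$: $W$ non-empty; $g:W\to W$; for each finite set $X$ of terms a binary relation $=_X$ on $W$; $\|\cdot\|$ maps atoms $P(x_1,\dots,x_n)$ and $D_Xy$ to subsets of $W$ (write $s\vDash\alpha$ for $s\in\|\alpha\|$, and $s\vDash D_XY$ iff $s\vDash D_Xy$ for all $y\in Y$), satisfying: (C1) $=_\emptyset$ is universal; (C2) each $=_X$ is an equivalence relation; (C3) $s\vDash D_Xx$ for $x\in X$; if $s\vDash D_XY$ and $s\vDash D_YZ$ then $s\vDash D_XZ$; $s\vDash D_V\bigcirc x$ for all terms $x$; (C4) if $s=_Xw$ and $s\vDash D_XY$ then $w\vDash D_XY$ and $s=_Yw$; (C5) if $s=_Xw$,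 $s\vDash P(x_1,\dots,x_n)$ with $x_i\in X$, then $w\vDash P(x_1,\dots,x_n)$; (C6) $s\vDash P(\bigcirc x_1,\dots,\bigcirc x_n)$ iff $g(s)\vDash P(x_1,\dots,x_n)$; (C7) if $s=_{\bigcirc X}w$ then $g(s)=_Xg(w)$; (C8) if $g(s)\vDash D_XY$ then $s\vDash D_{\bigcirc X}\bigcirc Y$. Truth: atoms via $\|\cdot\|$; Boolean as usual; $s\vDash\bigcirc\varphi$ iff $g(s)\vDash\varphi$; $s\vDash\mathsf{D}_X\varphi$ iff all $t$ with $s=_Xt$ satisfy $\varphi$. A general relational model of $\mathsf{DFD}^{\neq\emptyset}$ is the same but with relations $=_X$ and atoms $D_Xy$ only for non-empty $X$, condition C1 dropped, and C2–C8 required for non-empty sets only; it interprets $\mathcal{L}^{\neq\emptyset}$. *)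

theory Defs
  imports Main "HOL-Library.FSet"
begin

text \<open>Basic variables: the finite type 'v (the set V = UNIV). Predicate symbols: type 'p,
  with arities given by a parameter ar.\<close>

datatype 'v trm = Var 'v | Nxt "'v trm"

datatype ('v, 'p) fm =
    Pred 'p "'v trm list"
  | Neg "('v, 'p) fm"
  | Conj "('v, 'p) fm" "('v, 'p) fm"
  | Next "('v, 'p) fm"
  | Dbox "'v trm fset" "('v, 'p) fm"
  | Dep "'v trm fset" "'v trm"

definition imp :: "('v, 'p) fm \<Rightarrow> ('v, 'p) fm \<Rightarrow> ('v, 'p) fm" where
  "imp a b = Neg (Conj a (Neg b))"

definition iff :: "('v, 'p) fm \<Rightarrow> ('v, 'p) fm \<Rightarrow> ('v, 'p) fm" where
  "iff a b = Conj (imp a b) (imp b a)"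

text \<open>A fixed propositional truth constant (used for empty conjunctions); it lies in the
  non-empty-subscript fragment.\<close>
definition ftop :: "('v, 'p) fm" where
  "ftop = (let a = Dep {|Var undefined|} (Var undefined) in Neg (Conj a (Neg a)))"

fun conjs :: "('v, 'p) fm list \<Rightarrow> ('v, 'p) fm" where
  "conjs [] = ftop"
| "conjs [a] = a"
| "conjs (a # as) = Conj a (conjs as)"

text \<open>D_X Y for finite Y, given by an enumeration ys of Y.\<close>
definition DXY :: "'v trm fset \<Rightarrow> 'v trm list \<Rightarrow> ('v, 'p) fm" where
  "DXY X ys = conjs (map (Dep X) ys)"

definition Vset :: "('v::finite) trm fset" where
  "Vset = Abs_fset (range Var)"

fun wf :: "('p \<Rightarrow> nat) \<Rightarrow> ('v, 'p) fm \<Rightarrow> bool" where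
  "wf ar (Pred p xs) = (length xs = ar p)"
| "wf ar (Neg a) = wf ar a"
| "wf ar (Conj a b) = (wf ar a \<and> wf ar b)"
| "wf ar (Next a) = wf ar a"
| "wf ar (Dbox X a) = wf ar a"
| "wf ar (Dep X y) = True"

fun nes :: "('v, 'p) fm \<Rightarrow> bool" where
  "nes (Pred p xs) = True"
| "nes (Neg a) = nes a"
| "nes (Conj a b) = (nes a \<and> nes b)"
| "nes (Next a) = nes a"
| "nes (Dbox X a) = (X \<noteq> {||} \<and> nes a)"
| "nes (Dep X y) = (X \<noteq> {||})"

text \<open>Propositional evaluation treating non-Boolean formulas as atoms (for tautologies).\<close>
fun peval :: "(('v, 'p) fm \<Rightarrow> bool) \<Rightarrow> ('v, 'p) fm \<Rightarrow> bool" where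
  "peval v (Neg a) = (\<not> peval v a)"
| "peval v (Conj a b) = (peval v a \<and> peval v b)"
| "peval v a = v a"

inductive Ax :: "('v::finite, 'p) fm \<Rightarrow> bool" where
  taut: "(\<forall>v. peval v \<phi>) \<Longrightarrow> Ax \<phi>"
| kN: "Ax (imp (Next (imp \<phi> \<psi>)) (imp (Next \<phi>) (Next \<psi>)))"
| nN: "Ax (iff (Next (Neg \<phi>)) (Neg (Next \<phi>)))"
| kD: "Ax (imp (Dbox X (imp \<phi> \<psi>)) (imp (Dbox X \<phi>) (Dbox X \<psi>)))"
| pD: "Ax (imp (Pred p xs) (Dbox (fset_of_list xs) (Pred p xs)))"
| depD: "Ax (imp (Dep X y) (Dbox X (Dep X y)))"
| tD: "Ax (imp (Dbox X \<phi>) \<phi>)"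
| fourD: "Ax (imp (Dbox X \<phi>) (Dbox X (Dbox X \<phi>)))"
| fiveD: "Ax (imp (Neg (Dbox X \<phi>)) (Dbox X (Neg (Dbox X \<phi>))))"
| reflDep: "x |\<in>| X \<Longrightarrow> Ax (Dep X x)"
| transDep: "set ys = fset Y \<Longrightarrow> set zs = fset Z \<Longrightarrow>
     Ax (imp (Conj (DXY X ys) (DXY Y zs)) (DXY X zs))"
| vNext: "Ax (Dep Vset (Nxt (Var v)))"
| transfer: "set ys = fset Y \<Longrightarrow> Ax (imp (Conj (DXY X ys) (Dbox Y \<phi>)) (Dbox X \<phi>))"
| emptyNext: "Ax (imp (Dbox {||} \<phi>) (Next \<phi>))"
| nextPred: "Ax (iff (Next (Pred p xs)) (Pred p (map Nxt xs)))"
| nextD: "Ax (imp (Next (Dbox X \<phi>)) (Dbox (Nxt |`| X) (Next \<phi>)))"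
| nextDep: "Ax (imp (Next (Dep X y)) (Dep (Nxt |`| X) (Nxt y)))"

text \<open>Derivability; ne = True gives DFD with all axioms/rules restricted to the non-empty
  fragment plus the necessitation rule for the next-operator.\<close>
inductive DFDg :: "('p \<Rightarrow> nat) \<Rightarrow> bool \<Rightarrow> ('v::finite, 'p) fm \<Rightarrow> bool" for ar ne where
  ax: "Ax \<phi> \<Longrightarrow> wf ar \<phi> \<Longrightarrow> (ne \<longrightarrow> nes \<phi>) \<Longrightarrow> DFDg ar ne \<phi>"
| mp: "DFDg ar ne (imp \<phi> \<psi>) \<Longrightarrow> DFDg ar ne \<phi> \<Longrightarrow> DFDg ar ne \<psi>"
| necD: "DFDg ar ne \<phi> \<Longrightarrow> (ne \<longrightarrow> X \<noteq> {||}) \<Longrightarrow> DFDg ar ne (Dbox X \<phi>)"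
| necN: "ne \<Longrightarrow> DFDg ar ne \<phi> \<Longrightarrow> DFDg ar ne (Next \<phi>)"

definition DFD :: "('p \<Rightarrow> nat) \<Rightarrow> ('v::finite, 'p) fm \<Rightarrow> bool" where
  "DFD ar = DFDg ar False"

definition DFD_ne :: "('p \<Rightarrow> nat) \<Rightarrow> ('v::finite, 'p) fm \<Rightarrow> bool" where
  "DFD_ne ar = DFDg ar True"

text \<open>The set of states W is the (non-empty) type 'w.\<close>
record ('v, 'p, 'w) grm =
  g :: "'w \<Rightarrow> 'w"
  eqr :: "'v trm fset \<Rightarrow> 'w \<Rightarrow> 'w \<Rightarrow> bool"
  vP :: "'p \<Rightarrow> 'v trm list \<Rightarrow> 'w \<Rightarrow> bool"
  vD :: "'v trm fset \<Rightarrow> 'v trm \<Rightarrow> 'w \<Rightarrow> bool"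

definition dXY :: "('v, 'p, 'w) grm \<Rightarrow> 'w \<Rightarrow> 'v trm fset \<Rightarrow> 'v trm fset \<Rightarrow> bool" where
  "dXY M s X Y = (\<forall>y \<in> fset Y. vD M X y s)"

text \<open>ne = False: general relational model; ne = True: general relational model of
  DFD^{non-empty} (relations/atoms at the empty set are then irrelevant junk).\<close>
definition is_grm_gen :: "('p \<Rightarrow> nat) \<Rightarrow> bool \<Rightarrow> ('v::finite, 'p, 'w) grm \<Rightarrow> bool" where
  "is_grm_gen ar ne M \<longleftrightarrow>
    (let ok = (\<lambda>X. ne \<longrightarrow> X \<noteq> {||}) in
    (\<not> ne \<longrightarrow> (\<forall>s t. eqr M {||} s t)) \<and>
    (\<forall>X. ok X \<longrightarrow> equivp (eqr M X)) \<and>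
    (\<forall>X x s. ok X \<longrightarrow> x |\<in>| X \<longrightarrow> vD M X x s) \<and>
    (\<forall>X Y Z s. ok X \<longrightarrow> ok Y \<longrightarrow> ok Z \<longrightarrow> dXY M s X Y \<longrightarrow> dXY M s Y Z \<longrightarrow> dXY M s X Z) \<and>
    (\<forall>x s. vD M Vset (Nxt x) s) \<and>
    (\<forall>X Y s w. ok X \<longrightarrow> ok Y \<longrightarrow> eqr M X s w \<longrightarrow> dXY M s X Y \<longrightarrow>
        dXY M w X Y \<and> eqr M Y s w) \<and>
    (\<forall>X p xs s w. ok X \<longrightarrow> length xs = ar p \<longrightarrow> set xs \<subseteq> fset X \<longrightarrow> eqr M X s w \<longrightarrow>
        vP M p xs s \<longrightarrow> vP M p xs w) \<and>
    (\<forall>p xs s. length xs = ar p \<longrightarrow> (vP M p (map Nxt xs) s \<longleftrightarrow> vP M p xs (g M s))) \<and>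
    (\<forall>X s w. ok X \<longrightarrow> eqr M (Nxt |`| X) s w \<longrightarrow> eqr M X (g M s) (g M w)) \<and>
    (\<forall>X Y s. ok X \<longrightarrow> ok Y \<longrightarrow> dXY M (g M s) X Y \<longrightarrow> dXY M s (Nxt |`| X) (Nxt |`| Y)))"

definition is_grm :: "('p \<Rightarrow> nat) \<Rightarrow> ('v::finite, 'p, 'w) grm \<Rightarrow> bool" where
  "is_grm ar = is_grm_gen ar False"

definition is_grm_ne :: "('p \<Rightarrow> nat) \<Rightarrow> ('v::finite, 'p, 'w) grm \<Rightarrow> bool" where
  "is_grm_ne ar = is_grm_gen ar True"

fun sat :: "('v, 'p, 'w) grm \<Rightarrow> 'w \<Rightarrow> ('v, 'p) fm \<Rightarrow> bool" where
  "sat M s (Pred p xs) = vP M p xs s"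
| "sat M s (Neg a) = (\<not> sat M s a)"
| "sat M s (Conj a b) = (sat M s a \<and> sat M s b)"
| "sat M s (Next a) = sat M (g M s) a"
| "sat M s (Dbox X a) = (\<forall>t. eqr M X s t \<longrightarrow> sat M t a)"
| "sat M s (Dep X y) = vD M X y s"

end

theory Submission
  imports Defs
begin

(* Each axiom is valid because of the model condition
  matching it: the S5 axioms for D_X because =_X is an equivalence relation (C2), the
  dependence axioms by C3, locality of predicates and dependence atoms and the transfer axiom
  by C4/C5, the next-step axioms by C6-C8, and D_{} phi --> O phi by the universality of =_{}
  (C1). Axiom instances of DFD^{ne} carry only non-empty subscripts, which is exactly where the
  conditions on its models are imposed. *)

abbreviation admissible_subscript :: "bool \<Rightarrow> 'v trm fset \<Rightarrow> bool" where
  "admissible_subscript ne X \<equiv> ne \<longrightarrow> X \<noteq> {||}"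

lemma sat_imp [simp]: "sat M s (imp a b) = (sat M s a \<longrightarrow> sat M s b)"
  by (simp add: imp_def)

lemma sat_iff [simp]: "sat M s (iff a b) = (sat M s a \<longleftrightarrow> sat M s b)"
  by (auto simp add: iff_def)

lemma nes_imp [simp]: "nes (imp a b) = (nes a \<and> nes b)"
  by (simp add: imp_def)

lemma wf_imp [simp]: "wf ar (imp a b) = (wf ar a \<and> wf ar b)"
  by (simp add: imp_def)

lemma wf_iff [simp]: "wf ar (iff a b) = (wf ar a \<and> wf ar b)"
  by (auto simp add: iff_def)

lemma sat_ftop [simp]: "sat M s ftop"
  by (simp add: ftop_def Let_def)

lemma sat_conjs: "sat M s (conjs as) = (\<forall>a \<in> set as. sat M s a)"
  by (induction as rule: conjs.induct) auto

lemma nes_conjs: "nes (conjs as) = (\<forall>a \<in> set as. nes a)"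
  by (induction as rule: conjs.induct) (auto simp: ftop_def Let_def)

lemma sat_DXY: "set ys = fset Y \<Longrightarrow> sat M s (DXY X ys) = dXY M s X Y"
  by (auto simp: DXY_def sat_conjs dXY_def)

lemma nes_DXY: "nes (DXY X ys) = (ys = [] \<or> X \<noteq> {||})"
  by (auto simp: DXY_def nes_conjs)

lemma dXY_singleton [simp]: "dXY M s X {|y|} = vD M X y s"
  by (simp add: dXY_def)

lemma peval_sat: "peval (sat M s) \<phi> = sat M s \<phi>"
  by (induction \<phi>) auto

context
  fixes ar ne and M :: "('v::finite, 'p, 'w) grm"
  assumes model: "is_grm_gen ar ne M"
begin

lemma eqr_empty_universal: "\<not> ne \<Longrightarrow> eqr M {||} s t"
  using model by (simp add: is_grm_gen_def)

lemma equivp_eqr: "admissible_subscript ne X \<Longrightarrow> equivp (eqr M X)"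
  using model by (simp add: is_grm_gen_def)

lemma vD_refl: "admissible_subscript ne X \<Longrightarrow> x |\<in>| X \<Longrightarrow> vD M X x s"
  using model by (simp add: is_grm_gen_def)

lemma dXY_trans:
  "admissible_subscript ne X \<Longrightarrow> admissible_subscript ne Y \<Longrightarrow> admissible_subscript ne Z \<Longrightarrow>
    dXY M s X Y \<Longrightarrow> dXY M s Y Z \<Longrightarrow> dXY M s X Z"
  using model unfolding is_grm_gen_def Let_def by (elim conjE) metis

lemma vD_Vset_Nxt: "vD M Vset (Nxt x) s"
  using model by (simp add: is_grm_gen_def)

lemma eqr_dXY:
  "admissible_subscript ne X \<Longrightarrow> admissible_subscript ne Y \<Longrightarrow> eqr M X s w \<Longrightarrow> dXY M s X Y \<Longrightarrow>
    dXY M w X Y \<and> eqr M Y s w"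
  using model unfolding is_grm_gen_def Let_def by (elim conjE) metis

lemma vP_eqr:
  "admissible_subscript ne X \<Longrightarrow> length xs = ar p \<Longrightarrow> set xs \<subseteq> fset X \<Longrightarrow> eqr M X s w \<Longrightarrow>
    vP M p xs s \<Longrightarrow> vP M p xs w"
  using model unfolding is_grm_gen_def Let_def by (elim conjE) metis

lemma vP_map_Nxt: "length xs = ar p \<Longrightarrow> vP M p (map Nxt xs) s = vP M p xs (g M s)"
  using model by (simp add: is_grm_gen_def)

lemma eqr_Nxt_g:
  "admissible_subscript ne X \<Longrightarrow> eqr M (Nxt |`| X) s w \<Longrightarrow> eqr M X (g M s) (g M w)"
  using model unfolding is_grm_gen_def Let_def by (elim conjE) metis

lemma dXY_g_Nxt:
  "admissible_subscript ne X \<Longrightarrow> admissible_subscript ne Y \<Longrightarrow> dXY M (g M s) X Y \<Longrightarrow>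
    dXY M s (Nxt |`| X) (Nxt |`| Y)"
  using model unfolding is_grm_gen_def Let_def by (elim conjE) metis

lemma eqr_refl: "admissible_subscript ne X \<Longrightarrow> eqr M X s s"
  using equivp_eqr equivp_reflp by metis

lemma eqr_sym: "admissible_subscript ne X \<Longrightarrow> eqr M X s t \<Longrightarrow> eqr M X t s"
  using equivp_eqr equivp_symp by metis

lemma eqr_trans:
  "admissible_subscript ne X \<Longrightarrow> eqr M X s t \<Longrightarrow> eqr M X t u \<Longrightarrow> eqr M X s u"
  using equivp_eqr equivp_transp by metis

lemma Ax_sound:
  assumes "Ax \<phi>" and "wf ar \<phi>" and "ne \<longrightarrow> nes \<phi>"
  shows "sat M s \<phi>"
  using assms
proof (induction arbitrary: s rule: Ax.induct)
  case (taut \<phi>)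
  then show ?case using peval_sat[of M s \<phi>] by simp
next
  case (pD p xs)
  then show ?case using vP_eqr[of "fset_of_list xs" xs p s] by (auto simp: fset_of_list.rep_eq)
next
  case (depD X y)
  then show ?case using eqr_dXY[of X "{|y|}" s] by auto
next
  case (tD X \<phi>)
  then show ?case using eqr_refl[of X s] by auto
next
  case (fourD X \<phi>)
  then have X: "admissible_subscript ne X" by simp
  show ?case
  proof (simp, intro impI allI)
    fix t u
    assume "\<forall>t. eqr M X s t \<longrightarrow> sat M t \<phi>" and "eqr M X s t" and "eqr M X t u"
    then show "sat M u \<phi>" using eqr_trans[OF X] by blast
  qed
next
  case (fiveD X \<phi>)
  then have X: "admissible_subscript ne X" by simp
  show ?case
  proof (simp, intro impI allI)
    fix t
    assume "\<exists>u. eqr M X s u \<and> \<not> sat M u \<phi>" and "eqr M X s t"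
    then show "\<exists>u. eqr M X t u \<and> \<not> sat M u \<phi>"
      using eqr_sym[OF X] eqr_trans[OF X] by blast
  qed
next
  case (reflDep x X)
  then show ?case using vD_refl by simp
next
  case (transDep ys Y zs Z X)
  show ?case
  proof (cases "zs = []")
    case True
    then show ?thesis by (simp add: DXY_def)
  next
    case False
    with transDep have "admissible_subscript ne X" "admissible_subscript ne Y"
      "admissible_subscript ne Z"
      by (auto simp: nes_DXY)
    with transDep show ?thesis using dXY_trans[of X Y Z s] by (simp add: sat_DXY)
  qed
next
  case (vNext v)
  then show ?case by (simp add: vD_Vset_Nxt)
next
  case (transfer ys Y X \<phi>)
  then have "admissible_subscript ne X" "admissible_subscript ne Y"
    by (auto simp: nes_DXY)
  with transfer show ?case using eqr_dXY[of X Y s] by (auto simp: sat_DXY)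
next
  case (emptyNext \<phi>)
  then show ?case by (simp add: eqr_empty_universal)
next
  case (nextPred p xs)
  then show ?case by (simp add: vP_map_Nxt)
next
  case (nextD X \<phi>)
  then show ?case using eqr_Nxt_g[of X s] by auto
next
  case (nextDep X y)
  then show ?case using dXY_g_Nxt[of X "{|y|}" s] by simp
qed simp_all

end

lemma DFDg_sound:
  assumes "DFDg ar ne \<phi>" and "is_grm_gen ar ne M"
  shows "sat M s \<phi>"
  using assms
  by (induction arbitrary: s rule: DFDg.induct) (auto intro: Ax_sound)

theorem fact2p4:
  fixes ar :: "'p \<Rightarrow> nat"
  shows "(\<forall>(\<phi> :: ('v::finite, 'p) fm) (M :: ('v, 'p, 'w) grm) s.
            DFD ar \<phi> \<longrightarrow> is_grm ar M \<longrightarrow> sat M s \<phi>)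
       \<and> (\<forall>(\<phi> :: ('v::finite, 'p) fm) (M :: ('v, 'p, 'w) grm) s.
            DFD_ne ar \<phi> \<longrightarrow> is_grm_ne ar M \<longrightarrow> sat M s \<phi>)"
  by (auto simp: DFD_def DFD_ne_def is_grm_def is_grm_ne_def intro: DFDg_sound)

end
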